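(* Let $s\in\mathbb{N}$ and let $g:\mathbb{N}\to\mathbb{C}$ be an additive arithmetical function. Suppose that for every prime $p$ the series $\sum_{v=1}^{\infty}\frac{g(p^v)}{p^{vs}}$ converges, and that the series $\sum_{p}\sum_{v=1}^{\infty}\frac{g(p^v)}{p^{vs}}$ (over all primes $p$) converges. Define $\widehat{g}:\mathbb{N}\to\mathbb{C}$ by $$\widehat{g}(p^\alpha)=-\frac{g(p^{\alpha-1})}{p^{\alpha s}}+\Big(1-\frac{1}{p^s}\Big)\sum_{v\ge\alpha}\frac{g(p^v)}{p^{vs}}\quad(p\text{ prime},\ \alpha\in\mathbb{N}),$$ $$\widehat{g}(1)=\sum_{p}\widehat{g}(p),\qquad \widehat{g}(n)=0 \text{ if } n>1 \text{ is not a prime power}.$$ Then $g$ has a pointwise convergent Cohen–Ramanujan expansion with these coefficients, i.e. for every $a\in\mathbb{N}$, $$g(a)=\sum_{r=1}^{\infty}\widehat{g}(r)\,c_r^{s}(a^s),$$ the series being convergent.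
   Context: An arithmetical function $g$ is additive if $g(mn)=g(m)+g(n)$ whenever $m,n$ are coprime positive integers. For $s\in\mathbb{N}$ and integers $a,b$, $(a,b)_s$ denotes the largest $d^s$ with $d\in\mathbb{N}$ such that $d^s\mid a$ and $d^s\mid b$. The Cohen–Ramanujan sum is defined for $r,s\in\mathbb{N}$ and $n\in\mathbb{Z}$ by $$c_r^{s}(n)=\sum_{\substack{h=1\\ (h,r^s)_s=1}}^{r^s} e^{2\pi i n h/r^s}.$$ *)

theory Defs
  imports "HOL-Analysis.Analysis" "HOL-Computational_Algebra.Primes"
begin

definition additive :: "(nat \<Rightarrow> complex) \<Rightarrow> bool" where
  "additive g \<longleftrightarrow> (\<forall>m n. m > 0 \<longrightarrow> n > 0 \<longrightarrow> coprime m n \<longrightarrow> g (m * n) = g m + g n)"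

definition gcds :: "nat \<Rightarrow> int \<Rightarrow> int \<Rightarrow> int" where
  "gcds s a b = Max {int (d ^ s) | d. d \<ge> 1 \<and> int (d ^ s) dvd a \<and> int (d ^ s) dvd b}"

definition cohen_ramanujan :: "nat \<Rightarrow> nat \<Rightarrow> int \<Rightarrow> complex" where
  "cohen_ramanujan r s n =
     (\<Sum>h \<in> {h \<in> {1..r ^ s}. gcds s (int h) (int (r ^ s)) = 1}.
        exp (2 * of_real pi * \<i> * of_int n * of_nat h / of_nat (r ^ s)))"

definition ghat_pp :: "(nat \<Rightarrow> complex) \<Rightarrow> nat \<Rightarrow> nat \<Rightarrow> nat \<Rightarrow> complex" where
  "ghat_pp g s p \<alpha> =
     - g (p ^ (\<alpha> - 1)) / of_nat p ^ (\<alpha> * s)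
     + (1 - 1 / of_nat p ^ s) * (\<Sum>k. g (p ^ (\<alpha> + k)) / of_nat p ^ ((\<alpha> + k) * s))"

definition ghat :: "(nat \<Rightarrow> complex) \<Rightarrow> nat \<Rightarrow> nat \<Rightarrow> complex" where
  "ghat g s n =
     (if n = 1 then lim (\<lambda>N. \<Sum>p \<in> {p. prime p \<and> p \<le> N}. ghat_pp g s p 1)
      else if (\<exists>p \<alpha>. prime p \<and> \<alpha> \<ge> 1 \<and> n = p ^ \<alpha>)
      then (case (THE (p, \<alpha>). prime p \<and> \<alpha> \<ge> 1 \<and> n = p ^ \<alpha>) of (p, \<alpha>) \<Rightarrow> ghat_pp g s p \<alpha>)
      else 0)"

end

theory Submission
  imports Defs
begin

text \<open>
  The coefficients ghat vanish off 1 and the prime powers, and c_1^s = 1, so the R-th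
  partial sum is ghat(1) plus, for each prime p <= R, the sum of the terms
  ghat(p^alpha) c_{p^alpha}^s(a^s) with p^alpha <= R. With k = v_p(a) one has
  c_{p^alpha}^s(a^s) = [alpha <= k] p^(alpha s) - [alpha - 1 <= k] p^((alpha - 1) s), and
  ghat(p^alpha) - ghat(p^(alpha+1)) = (g(p^alpha) - g(p^(alpha-1))) / p^(alpha s), so once
  R >= a^2 the p-part telescopes to g(p^k) - ghat(p). By additivity the partial sum is then
  ghat(1) + g(a) - sum_{p <= R} ghat(p). Finally ghat(p) = (1 - p^-s) sum_v g(p^v) / p^(v s),
  so by Abel's test (the weights p^-s decrease) sum_p ghat(p) converges, and its sum is ghat(1).
\<close>

lemma exp_2pi_i_of_int: "exp (2 * of_real pi * \<i> * of_int m) = 1"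
  by (simp add: exp_eq_1)

lemma sum_roots_of_unity_powers:
  fixes n :: int
  assumes "M > 0"
  shows "(\<Sum>h\<in>{1..M}. exp (2 * of_real pi * \<i> * of_int n * of_nat h / of_nat M))
         = (if int M dvd n then of_nat M else 0)"
proof -
  define w where "w = exp (2 * of_real pi * \<i> * of_int n / of_nat M)"
  have exp_eq_power: "exp (2 * of_real pi * \<i> * of_int n * of_nat h / of_nat M) = w ^ h" for h
    unfolding w_def by (subst exp_of_nat_mult[symmetric]) (simp add: field_simps)
  show ?thesis
  proof (cases "int M dvd n")
    case True
    then obtain q where "n = int M * q" by blast
    then have "w = 1" unfolding w_def using assms
      by (simp add: exp_2pi_i_of_int[of q, symmetric] mult.assoc)
    then show ?thesis using True by (simp add: exp_eq_power)
  next
    case False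
    have "w ^ M = 1"
      unfolding w_def using assms
      by (subst exp_of_nat_mult[symmetric]) (simp add: exp_2pi_i_of_int)
    have "w \<noteq> 1"
    proof
      assume "w = 1"
      then obtain k :: int where "2 * pi * of_int n / of_nat M = of_int (2 * k) * pi"
        unfolding w_def exp_eq_1 by auto
      then have "of_int n = (of_int (k * int M) :: real)" using assms
        by (simp add: field_simps)
      then have "n = k * int M" by linarith
      then show False using False by simp
    qed
    have "(\<Sum>h\<in>{1..M}. w ^ h) = w * (\<Sum>i<M. w ^ i)"
      by (simp add: sum.atLeast1_atMost_eq sum_distrib_left)
    also have "\<dots> = w * ((w ^ M - 1) / (w - 1))"
      using \<open>w \<noteq> 1\<close> by (simp add: geometric_sum)
    also have "\<dots> = 0" using \<open>w ^ M = 1\<close> by simp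
    finally show ?thesis using False by (simp add: exp_eq_power)
  qed
qed

lemma gcds_prime_power_eq_1_iff:
  assumes p: "prime p" and "\<alpha> \<ge> 1" and "s \<ge> 1"
  shows "gcds s (int h) (int ((p ^ \<alpha>) ^ s)) = 1 \<longleftrightarrow> \<not> p ^ s dvd h"
proof -
  define S where "S = {int (d ^ s) | d. d \<ge> 1 \<and> int (d ^ s) dvd int h \<and> int (d ^ s) dvd int ((p ^ \<alpha>) ^ s)}"
  have gcds_eq: "gcds s (int h) (int ((p ^ \<alpha>) ^ s)) = Max S" unfolding gcds_def S_def ..
  have mem: "x \<in> S \<longleftrightarrow> (\<exists>d. x = int (d ^ s) \<and> d \<ge> 1 \<and> d ^ s dvd h \<and> d dvd p ^ \<alpha>)" for x
    unfolding S_def using \<open>s \<ge> 1\<close>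
    by (auto simp del: of_nat_power simp: of_nat_dvd_iff pow_divides_pow_iff)
  have "finite S"
  proof (rule finite_subset[of _ "{0..int ((p ^ \<alpha>) ^ s)}"])
    show "S \<subseteq> {0..int ((p ^ \<alpha>) ^ s)}"
    proof
      fix x assume "x \<in> S"
      then obtain d where d: "x = int (d ^ s)" "d dvd p ^ \<alpha>" using mem by blast
      then have "d ^ s \<le> (p ^ \<alpha>) ^ s"
        using p by (intro dvd_imp_le dvd_power_same) (auto simp: prime_gt_0_nat)
      then have "int (d ^ s) \<le> int ((p ^ \<alpha>) ^ s)" by (simp only: of_nat_le_iff)
      then show "x \<in> {0..int ((p ^ \<alpha>) ^ s)}" using d by simp
    qed
  qed simp
  show ?thesis
  proof
    assume gcds_1: "gcds s (int h) (int ((p ^ \<alpha>) ^ s)) = 1"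
    show "\<not> p ^ s dvd h"
    proof
      assume "p ^ s dvd h"
      moreover have "p dvd p ^ \<alpha>" using \<open>\<alpha> \<ge> 1\<close> by (simp add: dvd_power)
      ultimately have "int (p ^ s) \<in> S" using mem[of "int (p ^ s)"] prime_gt_0_nat[OF p] by force
      then have "int (p ^ s) \<le> Max S" using \<open>finite S\<close> by simp
      moreover have "p ^ s > 1" using one_less_power[OF prime_gt_1_nat[OF p]] \<open>s \<ge> 1\<close> by simp
      ultimately show False using gcds_1 gcds_eq by linarith
    qed
  next
    assume not_dvd: "\<not> p ^ s dvd h"
    have "S = {1}"
    proof (intro equalityI subsetI)
      fix x assume "x \<in> S"
      then obtain d where d: "x = int (d ^ s)" "d ^ s dvd h" "d dvd p ^ \<alpha>" using mem by blast
      then obtain i where i: "d = p ^ i" using divides_primepow_nat[OF p] by blast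
      have "i = 0"
      proof (rule ccontr)
        assume "i \<noteq> 0"
        then have "p ^ s dvd d ^ s" using i by (simp add: dvd_power_same)
        then show False using d(2) not_dvd dvd_trans by blast
      qed
      then show "x \<in> {1}" using d i by simp
    next
      show "x \<in> S" if "x \<in> {1}" for x using that mem[of 1] by (auto intro: exI[of _ 1])
    qed
    then show "gcds s (int h) (int ((p ^ \<alpha>) ^ s)) = 1" using gcds_eq by simp
  qed
qed

lemma cohen_ramanujan_prime_power:
  assumes p: "prime p" and "\<alpha> \<ge> 1" and "s \<ge> 1"
  shows "cohen_ramanujan (p ^ \<alpha>) s n =
    (if int ((p ^ \<alpha>) ^ s) dvd n then of_nat ((p ^ \<alpha>) ^ s) else 0)
    - (if int ((p ^ (\<alpha> - 1)) ^ s) dvd n then of_nat ((p ^ (\<alpha> - 1)) ^ s) else 0)"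
proof -
  define M where "M = (p ^ \<alpha>) ^ s"
  define M' where "M' = (p ^ (\<alpha> - 1)) ^ s"
  define P where "P = p ^ s"
  have "P > 0" "M' > 0" unfolding P_def M'_def using prime_gt_0_nat[OF p] by simp_all
  have M_eq: "M = P * M'" unfolding M_def M'_def P_def using \<open>\<alpha> \<ge> 1\<close>
    by (metis Suc_diff_le diff_Suc_1 power_Suc power_mult_distrib mult.commute)
  define f where "f h = exp (2 * of_real pi * \<i> * of_int n * of_nat h / of_nat M)" for h :: nat
  have "cohen_ramanujan (p ^ \<alpha>) s n = (\<Sum>h\<in>{h \<in> {1..M}. \<not> P dvd h}. f h)"
    unfolding cohen_ramanujan_def f_def M_def P_def
    by (rule sum.cong) (use gcds_prime_power_eq_1_iff[OF assms] in auto)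
  also have "\<dots> = sum f ({1..M} - {h \<in> {1..M}. P dvd h})"
    by (rule sum.cong) auto
  also have "\<dots> = sum f {1..M} - (\<Sum>h\<in>{h \<in> {1..M}. P dvd h}. f h)"
    by (rule sum_diff) auto
  also have "{h \<in> {1..M}. P dvd h} = (\<lambda>j. P * j) ` {1..M'}"
    using \<open>P > 0\<close> by (auto simp: M_eq Suc_le_eq elim!: dvdE)
  also have "(\<Sum>h\<in>(\<lambda>j. P * j) ` {1..M'}. f h)
      = (\<Sum>j\<in>{1..M'}. exp (2 * of_real pi * \<i> * of_int n * of_nat j / of_nat M'))"
    using \<open>P > 0\<close>
    by (subst sum.reindex) (auto simp: inj_on_def f_def M_eq intro!: sum.cong arg_cong[where f = exp])
  also have "sum f {1..M} = (if int M dvd n then of_nat M else 0)"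
    unfolding f_def using \<open>P > 0\<close> \<open>M' > 0\<close> by (intro sum_roots_of_unity_powers) (simp add: M_eq)
  also have "(\<Sum>j\<in>{1..M'}. exp (2 * of_real pi * \<i> * of_int n * of_nat j / of_nat M'))
      = (if int M' dvd n then of_nat M' else 0)"
    by (rule sum_roots_of_unity_powers[OF \<open>M' > 0\<close>])
  finally show ?thesis unfolding M_def M'_def .
qed

lemma cohen_ramanujan_1: "cohen_ramanujan 1 s n = 1"
proof -
  have "{int (d ^ s) | d. d \<ge> 1 \<and> int (d ^ s) dvd int 1 \<and> int (d ^ s) dvd int (1 ^ s)} = {1}"
    by (auto simp del: of_nat_power intro!: exI[of _ 1])
  then have "gcds s (int 1) (int (1 ^ s)) = 1" unfolding gcds_def by simp
  then have "{h \<in> {1..1 ^ s}. gcds s (int h) (int (1 ^ s)) = 1} = {1}" by auto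
  then show ?thesis
    unfolding cohen_ramanujan_def using exp_2pi_i_of_int[of n] by (simp add: mult.assoc)
qed

lemma cohen_ramanujan_prime_power_at_power:
  assumes p: "prime p" and "\<alpha> \<ge> 1" and "s \<ge> 1" and "a > 0"
  shows "cohen_ramanujan (p ^ \<alpha>) s (int (a ^ s)) =
    (if \<alpha> \<le> multiplicity p a then of_nat ((p ^ \<alpha>) ^ s) else 0)
    - (if \<alpha> - 1 \<le> multiplicity p a then of_nat ((p ^ (\<alpha> - 1)) ^ s) else 0)"
proof -
  have "int ((p ^ \<beta>) ^ s) dvd int (a ^ s) \<longleftrightarrow> \<beta> \<le> multiplicity p a" for \<beta>
  proof -
    have "int ((p ^ \<beta>) ^ s) dvd int (a ^ s) \<longleftrightarrow> p ^ \<beta> dvd a"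
      using \<open>s \<ge> 1\<close> by (simp only: int_dvd_int_iff pow_divides_pow_iff)
    also have "\<dots> \<longleftrightarrow> \<beta> \<le> multiplicity p a"
      using \<open>a > 0\<close> p by (intro power_dvd_iff_le_multiplicity) auto
    finally show ?thesis .
  qed
  then show ?thesis unfolding cohen_ramanujan_prime_power[OF assms(1-3)] by (simp only:)
qed

lemma summable_scaleR_decseq:
  fixes u :: "nat \<Rightarrow> 'a::banach"
  assumes "summable u" and "decseq b" and "\<And>n. b n \<ge> 0"
  shows "summable (\<lambda>n. b n *\<^sub>R u n)"
proof -
  define \<rho> where "\<rho> n = (\<Sum>k. u (k + n))" for n
  have \<rho>_Suc: "\<rho> n = u n + \<rho> (Suc n)" for n
    using suminf_split_head[OF summable_ignore_initial_segment[OF \<open>summable u\<close>, of n]]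
    unfolding \<rho>_def by (simp add: add.commute add_Suc_right)
  have "(\<lambda>n. suminf u - sum u {..<n}) \<longlonglongrightarrow> suminf u - suminf u"
    by (intro tendsto_intros summable_LIMSEQ \<open>summable u\<close>)
  then have "\<rho> \<longlonglongrightarrow> 0"
    unfolding \<rho>_def suminf_minus_initial_segment[OF \<open>summable u\<close>] by simp
  then obtain C where C: "\<And>n. norm (\<rho> n) \<le> C"
    using convergent_imp_Bseq[OF convergentI[OF \<open>\<rho> \<longlonglongrightarrow> 0\<close>]] by (auto simp: Bseq_def)
  obtain L where "b \<longlonglongrightarrow> L" using decseq_convergent[of b 0] assms by blast
  have "(\<lambda>n. b n *\<^sub>R \<rho> n) \<longlonglongrightarrow> L *\<^sub>R 0"
    by (intro tendsto_intros \<open>\<rho> \<longlonglongrightarrow> 0\<close> \<open>b \<longlonglongrightarrow> L\<close>)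
  then have telescope: "summable (\<lambda>n. b n *\<^sub>R \<rho> n - b (Suc n) *\<^sub>R \<rho> (Suc n))"
    by (rule telescope_summable')
  have correction: "summable (\<lambda>n. (b (Suc n) - b n) *\<^sub>R \<rho> (Suc n))"
  proof (rule summable_comparison_test')
    show "summable (\<lambda>n. C * (b n - b (Suc n)))"
      by (intro summable_mult telescope_summable'[OF \<open>b \<longlonglongrightarrow> L\<close>])
    fix n
    have "b (Suc n) \<le> b n" using \<open>decseq b\<close> by (simp add: decseq_Suc_iff)
    then show "norm ((b (Suc n) - b n) *\<^sub>R \<rho> (Suc n)) \<le> C * (b n - b (Suc n))"
      using C[of "Suc n"] by (simp add: mult.commute mult_right_mono)
  qed
  have "b n *\<^sub>R u n = (b n *\<^sub>R \<rho> n - b (Suc n) *\<^sub>R \<rho> (Suc n)) + (b (Suc n) - b n) *\<^sub>R \<rho> (Suc n)" for n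
    using \<rho>_Suc[of n] by (simp add: algebra_simps)
  then show ?thesis using summable_add[OF telescope correction] by (simp only:)
qed

lemma additive_1: "additive g \<Longrightarrow> g 1 = 0"
  unfolding additive_def by (metis add_cancel_right_right coprime_1_left mult_1 zero_less_one)

lemma additive_prod_prime_powers:
  assumes "additive g" and "finite P" and "\<And>p. p \<in> P \<Longrightarrow> prime p"
  shows "g (\<Prod>p\<in>P. p ^ e p) = (\<Sum>p\<in>P. g (p ^ e p))"
  using assms(2,3)
proof (induction P rule: finite_induct)
  case empty
  then show ?case using additive_1[OF \<open>additive g\<close>] by simp
next
  case (insert q P)
  have "coprime (q ^ e q) (\<Prod>p\<in>P. p ^ e p)"
    using insert
    by (intro coprime_power_left_iff[THEN iffD2] prod_coprime_right
        coprime_power_right_iff[THEN iffD2] disjI1) (metis insertCI primes_coprime)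
  moreover have "q ^ e q > 0" "(\<Prod>p\<in>P. p ^ e p) > 0"
    using insert prime_gt_0_nat by (auto intro: prod_pos)
  ultimately show ?case using insert \<open>additive g\<close> unfolding additive_def by simp
qed

lemma additive_eq_sum_primes_le:
  assumes "additive g" and "a > 0" and "a \<le> N"
  shows "g a = (\<Sum>p\<in>{p. prime p \<and> p \<le> N}. g (p ^ multiplicity p a))"
proof -
  have "g a = g (\<Prod>p\<in>prime_factors a. p ^ multiplicity p a)"
    using prime_factorization_nat[OF \<open>a > 0\<close>] by simp
  also have "\<dots> = (\<Sum>p\<in>prime_factors a. g (p ^ multiplicity p a))"
    by (rule additive_prod_prime_powers[OF \<open>additive g\<close>]) auto
  also have "\<dots> = (\<Sum>p\<in>{p. prime p \<and> p \<le> N}. g (p ^ multiplicity p a))"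
  proof (rule sum.mono_neutral_left)
    show "prime_factors a \<subseteq> {p. prime p \<and> p \<le> N}"
      using assms(2,3) by (auto simp: in_prime_factors_iff intro: le_trans[OF dvd_imp_le])
    show "\<forall>p\<in>{p. prime p \<and> p \<le> N} - prime_factors a. g (p ^ multiplicity p a) = 0"
      using \<open>a > 0\<close> additive_1[OF \<open>additive g\<close>]
      by (auto simp: in_prime_factors_iff not_dvd_imp_multiplicity_0)
  qed auto
  finally show ?thesis .
qed

lemma ghat_prime_power:
  assumes p: "prime p" and "\<alpha> \<ge> 1"
  shows "ghat g s (p ^ \<alpha>) = ghat_pp g s p \<alpha>"
proof -
  have "(THE (q, \<beta>). prime q \<and> \<beta> \<ge> 1 \<and> p ^ \<alpha> = q ^ \<beta>) = (p, \<alpha>)"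
  proof (rule the_equality)
    fix x assume "case x of (q, \<beta>) \<Rightarrow> prime q \<and> \<beta> \<ge> 1 \<and> p ^ \<alpha> = q ^ \<beta>"
    then obtain q \<beta> where x: "x = (q, \<beta>)" "prime q" "\<beta> \<ge> 1" "p ^ \<alpha> = q ^ \<beta>"
      by (cases x) auto
    then show "x = (p, \<alpha>)" using prime_power_inj'[OF p x(2,4)] \<open>\<alpha> \<ge> 1\<close> by auto
  qed (use assms in simp)
  moreover have "p ^ \<alpha> \<noteq> 1" using assms prime_gt_1_nat[OF p] by simp
  moreover have "\<exists>q \<beta>. prime q \<and> \<beta> \<ge> 1 \<and> p ^ \<alpha> = q ^ \<beta>" using assms by blast
  ultimately show ?thesis unfolding ghat_def by simp
qed

lemma ghat_pp_Suc_diff: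
  assumes "prime p" and "summable (\<lambda>v. g (p ^ Suc v) / of_nat p ^ (Suc v * s))"
  shows "ghat_pp g s p (Suc k) - ghat_pp g s p (Suc (Suc k))
       = (g (p ^ Suc k) - g (p ^ k)) / of_nat p ^ (Suc k * s)"
proof -
  define q :: complex where "q = of_nat p ^ s"
  define t where "t v = g (p ^ v) / q ^ v" for v
  define T where "T j = (\<Sum>i. t (Suc j + i))" for j
  have "q \<noteq> 0" unfolding q_def using prime_gt_0_nat[OF \<open>prime p\<close>] by simp
  have q_pow: "of_nat p ^ (v * s) = q ^ v" for v
    unfolding q_def by (simp add: power_mult mult.commute)
  have "summable (\<lambda>v. t (Suc v))"
    using assms(2) unfolding q_pow t_def .
  from summable_ignore_initial_segment[OF this, of k]
  have "summable (\<lambda>i. t (Suc k + i))" by (simp add: add.commute)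
  from suminf_split_head[OF this] have T_Suc: "T k = t (Suc k) + T (Suc k)"
    unfolding T_def by simp
  have ghat_pp_T: "ghat_pp g s p (Suc j) = - g (p ^ j) / q ^ Suc j + (1 - 1 / q) * T j" for j
    unfolding ghat_pp_def q_pow by (simp add: T_def t_def q_def)
  show ?thesis
    using \<open>q \<noteq> 0\<close> unfolding ghat_pp_T q_pow T_Suc by (simp add: t_def field_simps)
qed

lemma ghat_pp_telescoping_sum:
  assumes p: "prime p" and "g 1 = 0"
    and "summable (\<lambda>v. g (p ^ Suc v) / of_nat p ^ (Suc v * s))"
  shows "(\<Sum>\<alpha>\<in>{1..Suc k}. ghat_pp g s p \<alpha> *
           ((if \<alpha> \<le> k then of_nat ((p ^ \<alpha>) ^ s) else 0) - of_nat ((p ^ (\<alpha> - 1)) ^ s)))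
         = g (p ^ k) - ghat_pp g s p 1"
proof -
  define q :: complex where "q = of_nat p ^ s"
  define G where "G = ghat_pp g s p"
  have "q \<noteq> 0" unfolding q_def using prime_gt_0_nat[OF p] by simp
  have q_pow: "of_nat ((p ^ \<alpha>) ^ s) = q ^ \<alpha>" "of_nat p ^ (\<alpha> * s) = q ^ \<alpha>" for \<alpha>
    unfolding q_def by (simp_all add: power_mult[symmetric] mult.commute)
  have "(\<Sum>\<alpha>\<in>{1..k}. G \<alpha> * (q ^ \<alpha> - q ^ (\<alpha> - 1))) - G (Suc k) * q ^ k = g (p ^ k) - G 1" for k
  proof (induction k)
    case 0
    then show ?case using \<open>g 1 = 0\<close> by simp
  next
    case (Suc k)
    have "G (Suc k) - G (Suc (Suc k)) = (g (p ^ Suc k) - g (p ^ k)) / q ^ Suc k"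
      unfolding G_def q_pow(2)[symmetric] by (rule ghat_pp_Suc_diff[OF p assms(3)])
    then have "(\<Sum>\<alpha>\<in>{1..Suc k}. G \<alpha> * (q ^ \<alpha> - q ^ (\<alpha> - 1))) - G (Suc (Suc k)) * q ^ Suc k
       = ((\<Sum>\<alpha>\<in>{1..k}. G \<alpha> * (q ^ \<alpha> - q ^ (\<alpha> - 1))) - G (Suc k) * q ^ k)
         + (g (p ^ Suc k) - g (p ^ k))"
      using \<open>q \<noteq> 0\<close> by (simp add: field_simps)
    then show ?case unfolding Suc.IH by simp
  qed
  moreover have "(\<Sum>\<alpha>\<in>{1..k}. G \<alpha> * ((if \<alpha> \<le> k then q ^ \<alpha> else 0) - q ^ (\<alpha> - 1)))
      = (\<Sum>\<alpha>\<in>{1..k}. G \<alpha> * (q ^ \<alpha> - q ^ (\<alpha> - 1)))"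
    by (intro sum.cong) auto
  ultimately show ?thesis unfolding q_pow G_def by simp
qed

lemma sum_primes_le_eq_sum_atMost:
  fixes f :: "nat \<Rightarrow> 'a::comm_monoid_add"
  shows "(\<Sum>p\<in>{p. prime p \<and> p \<le> N}. f p) = (\<Sum>n\<le>N. if prime n then f n else 0)"
  by (rule sum.mono_neutral_cong_left) auto

lemma ghat_pp_1:
  "g 1 = 0 \<Longrightarrow> ghat_pp g s p 1 = (1 - 1 / of_nat p ^ s) * (\<Sum>v. g (p ^ Suc v) / of_nat p ^ (Suc v * s))"
  by (simp add: ghat_pp_def)

lemma sum_primes_ghat_pp_1_LIMSEQ:
  assumes "g 1 = 0"
    and "convergent (\<lambda>N. \<Sum>p \<in> {p. prime p \<and> p \<le> N}. \<Sum>v. g (p ^ Suc v) / of_nat p ^ (Suc v * s))"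
  shows "(\<lambda>N. \<Sum>p\<in>{p. prime p \<and> p \<le> N}. ghat_pp g s p 1) \<longlonglongrightarrow> ghat g s 1"
proof -
  define u where "u n = (if prime n then \<Sum>v. g (n ^ Suc v) / of_nat n ^ (Suc v * s) else 0)" for n
  define b where "b n = 1 / real (max n 1) ^ s" for n
  have "summable u"
    using assms(2) unfolding summable_iff_convergent' u_def sum_primes_le_eq_sum_atMost .
  moreover have "decseq b" unfolding decseq_def b_def
    by (auto intro!: divide_left_mono power_mono mult_pos_pos simp: max_def)
  ultimately have "summable (\<lambda>n. b n *\<^sub>R u n)"
    by (rule summable_scaleR_decseq) (simp add: b_def)
  have "(if prime n then ghat_pp g s n 1 else 0) = u n - b n *\<^sub>R u n" for n
  proof (cases "prime n")
    case True
    then have "max n 1 = n" using prime_gt_1_nat[of n] by simp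
    then show ?thesis using True
      unfolding u_def b_def ghat_pp_1[of g, OF \<open>g 1 = 0\<close>] by (simp add: scaleR_conv_of_real algebra_simps)
  qed (simp add: u_def)
  then have "summable (\<lambda>n. if prime n then ghat_pp g s n 1 else 0)"
    using summable_diff[OF \<open>summable u\<close> \<open>summable (\<lambda>n. b n *\<^sub>R u n)\<close>] by (simp only:)
  from summable_LIMSEQ'[OF this]
  have *: "(\<lambda>N. \<Sum>p\<in>{p. prime p \<and> p \<le> N}. ghat_pp g s p 1)
           \<longlonglongrightarrow> (\<Sum>n. if prime n then ghat_pp g s n 1 else 0)"
    unfolding sum_primes_le_eq_sum_atMost .
  then show ?thesis unfolding ghat_def using limI[OF *] by simp
qed

lemma exponent_less_prime_power:
  assumes "prime p"
  shows "\<alpha> < p ^ \<alpha>"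
proof -
  have "\<alpha> < 2 ^ \<alpha>" by (rule less_exp)
  also have "(2::nat) ^ \<alpha> \<le> p ^ \<alpha>" using prime_ge_2_nat[OF assms] by (rule power_mono) simp
  finally show ?thesis .
qed

lemma inj_on_prime_power: "inj_on (\<lambda>(p, \<alpha>). p ^ \<alpha>) {(p, \<alpha>). prime (p::nat) \<and> \<alpha> \<ge> 1}"
proof (rule inj_onI)
  fix x y :: "nat \<times> nat"
  assume "x \<in> {(p, \<alpha>). prime p \<and> \<alpha> \<ge> 1}" "y \<in> {(p, \<alpha>). prime p \<and> \<alpha> \<ge> 1}"
    and "(case x of (p, \<alpha>) \<Rightarrow> p ^ \<alpha>) = (case y of (p, \<alpha>) \<Rightarrow> p ^ \<alpha>)"
  then show "x = y" using prime_power_inj'[of "fst x" "fst y" "snd x" "snd y"]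
    by (auto simp: case_prod_beta prod_eq_iff)
qed

lemma prime_powers_atLeast2_atMost_eq_image:
  "{r \<in> {2..R}. \<exists>p \<alpha>. prime p \<and> \<alpha> \<ge> 1 \<and> r = p ^ \<alpha>}
   = (\<lambda>(p, \<alpha>). p ^ \<alpha>) ` Sigma {p. prime p \<and> p \<le> R} (\<lambda>p. {\<alpha>\<in>{1..R}. p ^ \<alpha> \<le> R})"
  (is "?PP = _ ` ?Sig")
proof (intro equalityI subsetI)
  fix r assume "r \<in> ?PP"
  then obtain p \<alpha> where r: "prime p" "\<alpha> \<ge> 1" "r = p ^ \<alpha>" "r \<le> R" by auto
  have "p \<le> p ^ \<alpha>" using r(2) prime_gt_0_nat[OF r(1)] by (intro self_le_power) auto
  moreover have "\<alpha> < p ^ \<alpha>" using exponent_less_prime_power[OF r(1)] .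
  ultimately have "(p, \<alpha>) \<in> ?Sig" using r by auto
  then show "r \<in> (\<lambda>(p, \<alpha>). p ^ \<alpha>) ` ?Sig" using r by force
next
  fix r assume "r \<in> (\<lambda>(p, \<alpha>). p ^ \<alpha>) ` ?Sig"
  then obtain p \<alpha> where r: "prime p" "\<alpha> \<ge> 1" "p ^ \<alpha> \<le> R" "r = p ^ \<alpha>" by auto
  have "2 \<le> p" using prime_ge_2_nat[OF r(1)] .
  also have "p \<le> p ^ \<alpha>" using r(2) prime_gt_0_nat[OF r(1)] by (intro self_le_power) auto
  finally show "r \<in> ?PP" using r by auto
qed

lemma sum_prime_power_supported:
  fixes F :: "nat \<Rightarrow> 'a::comm_monoid_add"
  assumes "R \<ge> 1" and F_0: "\<And>r. r \<noteq> 1 \<Longrightarrow> \<not> (\<exists>p \<alpha>. prime p \<and> \<alpha> \<ge> 1 \<and> r = p ^ \<alpha>) \<Longrightarrow> F r = 0"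
  shows "(\<Sum>r=1..R. F r)
         = F 1 + (\<Sum>p\<in>{p. prime p \<and> p \<le> R}. \<Sum>\<alpha>\<in>{\<alpha>\<in>{1..R}. p ^ \<alpha> \<le> R}. F (p ^ \<alpha>))"
proof -
  define PP where "PP = {r \<in> {2..R}. \<exists>p \<alpha>. prime p \<and> \<alpha> \<ge> 1 \<and> r = p ^ \<alpha>}"
  define Sig where "Sig = Sigma {p. prime p \<and> p \<le> R} (\<lambda>p. {\<alpha>\<in>{1..R}. p ^ \<alpha> \<le> R})"
  have "inj_on (\<lambda>(p, \<alpha>). p ^ \<alpha>) Sig"
    by (rule inj_on_subset[OF inj_on_prime_power]) (auto simp: Sig_def)
  have "(\<Sum>r=1..R. F r) = F 1 + (\<Sum>r=2..R. F r)"
    using sum.atLeast_Suc_atMost[OF \<open>R \<ge> 1\<close>, of F] by (simp add: numeral_2_eq_2)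
  also have "(\<Sum>r=2..R. F r) = sum F PP"
  proof (rule sum.mono_neutral_right)
    show "\<forall>r\<in>{2..R} - PP. F r = 0"
      by (intro ballI F_0) (auto simp: PP_def)
  qed (auto simp: PP_def)
  also have "\<dots> = (\<Sum>(p, \<alpha>)\<in>Sig. F (p ^ \<alpha>))"
    unfolding PP_def Sig_def prime_powers_atLeast2_atMost_eq_image
    by (subst sum.reindex[OF \<open>inj_on _ Sig\<close>[unfolded Sig_def]]) (simp add: case_prod_beta')
  also have "\<dots> = (\<Sum>p\<in>{p. prime p \<and> p \<le> R}. \<Sum>\<alpha>\<in>{\<alpha>\<in>{1..R}. p ^ \<alpha> \<le> R}. F (p ^ \<alpha>))"
    unfolding Sig_def by (rule sum.Sigma[symmetric]) auto
  finally show ?thesis .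
qed

lemma prime_power_Suc_multiplicity_le:
  fixes p a R :: nat
  assumes p: "prime p" and "a > 0" and "p \<le> R" and "a * a \<le> R"
  shows "p ^ Suc (multiplicity p a) \<le> R"
proof (cases "p dvd a")
  case True
  then have "p \<le> a" using \<open>a > 0\<close> by (rule dvd_imp_le)
  moreover have "p ^ multiplicity p a \<le> a"
    using \<open>a > 0\<close> by (intro dvd_imp_le multiplicity_dvd) auto
  ultimately have "p * p ^ multiplicity p a \<le> a * a" by (rule mult_le_mono)
  then show ?thesis using \<open>a * a \<le> R\<close> by simp
next
  case False
  then show ?thesis using \<open>p \<le> R\<close> by (simp add: not_dvd_imp_multiplicity_0)
qed

lemma sum_ghat_cohen_ramanujan_prime_powers:
  assumes "s \<ge> 1" and "a > 0" and "g 1 = 0" and p: "prime p"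
    and summable: "summable (\<lambda>v. g (p ^ Suc v) / of_nat p ^ (Suc v * s))"
    and "p ^ Suc (multiplicity p a) \<le> R"
  shows "(\<Sum>\<alpha>\<in>{\<alpha>\<in>{1..R}. p ^ \<alpha> \<le> R}. ghat g s (p ^ \<alpha>) * cohen_ramanujan (p ^ \<alpha>) s (int (a ^ s)))
         = g (p ^ multiplicity p a) - ghat_pp g s p 1"
proof -
  define k where "k = multiplicity p a"
  have summand: "ghat g s (p ^ \<alpha>) * cohen_ramanujan (p ^ \<alpha>) s (int (a ^ s)) = ghat_pp g s p \<alpha> *
      ((if \<alpha> \<le> k then of_nat ((p ^ \<alpha>) ^ s) else 0)
       - (if \<alpha> - 1 \<le> k then of_nat ((p ^ (\<alpha> - 1)) ^ s) else 0))" if "\<alpha> \<ge> 1" for \<alpha>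
    unfolding k_def ghat_prime_power[OF p that]
      cohen_ramanujan_prime_power_at_power[OF p that \<open>s \<ge> 1\<close> \<open>a > 0\<close>] ..
  have exponents_subset: "{1..Suc k} \<subseteq> {\<alpha>\<in>{1..R}. p ^ \<alpha> \<le> R}"
  proof
    fix \<alpha> assume "\<alpha> \<in> {1..Suc k}"
    then have "p ^ \<alpha> \<le> p ^ Suc k" using prime_gt_0_nat[OF p] by (intro power_increasing) auto
    moreover have "\<alpha> < p ^ \<alpha>" using exponent_less_prime_power[OF p] .
    ultimately show "\<alpha> \<in> {\<alpha>\<in>{1..R}. p ^ \<alpha> \<le> R}"
      using \<open>\<alpha> \<in> {1..Suc k}\<close> \<open>p ^ Suc (multiplicity p a) \<le> R\<close> unfolding k_def by auto
  qed
  have vanish: "ghat g s (p ^ \<alpha>) * cohen_ramanujan (p ^ \<alpha>) s (int (a ^ s)) = 0"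
    if "\<alpha> > Suc k" for \<alpha>
    using summand[of \<alpha>] that by simp
  have "(\<Sum>\<alpha>\<in>{\<alpha>\<in>{1..R}. p ^ \<alpha> \<le> R}. ghat g s (p ^ \<alpha>) * cohen_ramanujan (p ^ \<alpha>) s (int (a ^ s)))
      = (\<Sum>\<alpha>\<in>{1..Suc k}. ghat g s (p ^ \<alpha>) * cohen_ramanujan (p ^ \<alpha>) s (int (a ^ s)))"
    by (intro sum.mono_neutral_right exponents_subset ballI vanish) auto
  also have "\<dots> = (\<Sum>\<alpha>\<in>{1..Suc k}. ghat_pp g s p \<alpha> *
      ((if \<alpha> \<le> k then of_nat ((p ^ \<alpha>) ^ s) else 0) - of_nat ((p ^ (\<alpha> - 1)) ^ s)))"
    by (intro sum.cong refl) (subst summand; auto)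
  also have "\<dots> = g (p ^ k) - ghat_pp g s p 1"
    by (rule ghat_pp_telescoping_sum[OF p \<open>g 1 = 0\<close> summable])
  finally show ?thesis unfolding k_def .
qed

lemma ghat_cohen_ramanujan_partial_sum:
  assumes "s \<ge> 1" and "additive g"
    and summable: "\<And>p. prime p \<Longrightarrow> summable (\<lambda>v. g (p ^ Suc v) / of_nat p ^ (Suc v * s))"
    and "a > 0" and "a * a \<le> R"
  shows "(\<Sum>r=1..R. ghat g s r * cohen_ramanujan r s (int (a ^ s)))
         = ghat g s 1 + g a - (\<Sum>p\<in>{p. prime p \<and> p \<le> R}. ghat_pp g s p 1)"
proof -
  have "a \<le> a * a" using \<open>a > 0\<close> by simp
  then have "a \<le> R" "R \<ge> 1" using \<open>a > 0\<close> \<open>a * a \<le> R\<close> by linarith+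
  have "g 1 = 0" using additive_1[OF \<open>additive g\<close>] .
  have vanish: "ghat g s r * cohen_ramanujan r s (int (a ^ s)) = 0"
    if "r \<noteq> 1" "\<not> (\<exists>p \<alpha>. prime p \<and> \<alpha> \<ge> 1 \<and> r = p ^ \<alpha>)" for r
  proof -
    have "ghat g s r = 0" using that unfolding ghat_def by (simp only: if_False)
    then show ?thesis by simp
  qed
  have "(\<Sum>r=1..R. ghat g s r * cohen_ramanujan r s (int (a ^ s)))
      = ghat g s 1 * cohen_ramanujan 1 s (int (a ^ s))
        + (\<Sum>p\<in>{p. prime p \<and> p \<le> R}. \<Sum>\<alpha>\<in>{\<alpha>\<in>{1..R}. p ^ \<alpha> \<le> R}.
            ghat g s (p ^ \<alpha>) * cohen_ramanujan (p ^ \<alpha>) s (int (a ^ s)))"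
    by (rule sum_prime_power_supported[OF \<open>R \<ge> 1\<close>]) (use vanish in blast)
  also have "\<dots> = ghat g s 1 + (\<Sum>p\<in>{p. prime p \<and> p \<le> R}. g (p ^ multiplicity p a) - ghat_pp g s p 1)"
  proof (intro arg_cong2[where f = "(+)"] sum.cong refl)
    show "ghat g s 1 * cohen_ramanujan 1 s (int (a ^ s)) = ghat g s 1"
      by (simp only: cohen_ramanujan_1 mult_1_right)
  next
    fix p assume "p \<in> {p. prime p \<and> p \<le> R}"
    then have p: "prime p" and "p \<le> R" by auto
    show "(\<Sum>\<alpha>\<in>{\<alpha>\<in>{1..R}. p ^ \<alpha> \<le> R}. ghat g s (p ^ \<alpha>) * cohen_ramanujan (p ^ \<alpha>) s (int (a ^ s)))
        = g (p ^ multiplicity p a) - ghat_pp g s p 1"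
      using prime_power_Suc_multiplicity_le[OF p \<open>a > 0\<close> \<open>p \<le> R\<close> \<open>a * a \<le> R\<close>]
      by (rule sum_ghat_cohen_ramanujan_prime_powers[OF \<open>s \<ge> 1\<close> \<open>a > 0\<close> \<open>g 1 = 0\<close> p summable[OF p]])
  qed
  also have "\<dots> = ghat g s 1 + g a - (\<Sum>p\<in>{p. prime p \<and> p \<le> R}. ghat_pp g s p 1)"
    using additive_eq_sum_primes_le[OF \<open>additive g\<close> \<open>a > 0\<close> \<open>a \<le> R\<close>] by (simp add: sum_subtractf)
  finally show ?thesis .
qed

theorem mainTheorem4:
  fixes g :: "nat \<Rightarrow> complex" and s :: nat
  assumes "s \<ge> 1"
    and "additive g"
    and "\<And>p. prime p \<Longrightarrow> summable (\<lambda>v. g (p ^ Suc v) / of_nat p ^ (Suc v * s))"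
    and "convergent (\<lambda>N. \<Sum>p \<in> {p. prime p \<and> p \<le> N}.
                         \<Sum>v. g (p ^ Suc v) / of_nat p ^ (Suc v * s))"
  shows "\<forall>a \<ge> 1. (\<lambda>R. \<Sum>r = 1..R. ghat g s r * cohen_ramanujan r s (int (a ^ s)))
                   \<longlonglongrightarrow> g a"
proof (intro allI impI)
  fix a :: nat
  assume "a \<ge> 1"
  then have "a > 0" by simp
  let ?prime_sum = "\<lambda>R. \<Sum>p\<in>{p. prime p \<and> p \<le> R}. ghat_pp g s p 1"
  have "\<forall>\<^sub>F R in sequentially. (\<Sum>r = 1..R. ghat g s r * cohen_ramanujan r s (int (a ^ s)))
                                = ghat g s 1 + g a - ?prime_sum R"
    using eventually_ge_at_top[of "a * a"]
    by eventually_elim (rule ghat_cohen_ramanujan_partial_sum[OF assms(1-3) \<open>a > 0\<close>])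
  moreover have "(\<lambda>R. ghat g s 1 + g a - ?prime_sum R) \<longlonglongrightarrow> ghat g s 1 + g a - ghat g s 1"
    using sum_primes_ghat_pp_1_LIMSEQ[OF additive_1[OF assms(2)] assms(4)] by (intro tendsto_intros)
  ultimately show "(\<lambda>R. \<Sum>r = 1..R. ghat g s r * cohen_ramanujan r s (int (a ^ s))) \<longlonglongrightarrow> g a"
    by (simp add: tendsto_cong)
qed

end
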